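(* For every tree $T$, the numbers $\mathrm{sn}(T,k)$ are monotone non-decreasing in $k$ (for $k\ge\chi(T)$).
   Context: For a graph $G=(V,E)$ and an integer $k\ge\chi(G)$, a proper $k$-colouring is a map $c:V\to[k]$ with $c(u)\neq c(v)$ for every edge $uv$. $\mathrm{sn}(G,k)$ is the minimum number of vertices of $G$ that have to be coloured in a partial colouring such that there exists a unique proper $k$-colouring of $G$ extending it. *)

theory Defs
  imports Main
begin

definition simple_graph :: "'a set \<Rightarrow> ('a \<Rightarrow> 'a \<Rightarrow> bool) \<Rightarrow> bool" where
  "simple_graph V E \<longleftrightarrow> finite V \<and>
     (\<forall>u v. E u v \<longrightarrow> u \<in> V \<and> v \<in> V) \<and>
     (\<forall>u v. E u v \<longrightarrow> E v u) \<and> (\<forall>v. \<not> E v v)"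

definition connected_graph :: "'a set \<Rightarrow> ('a \<Rightarrow> 'a \<Rightarrow> bool) \<Rightarrow> bool" where
  "connected_graph V E \<longleftrightarrow> V \<noteq> {} \<and> (\<forall>u\<in>V. \<forall>v\<in>V. E\<^sup>*\<^sup>* u v)"

definition is_cycle :: "('a \<Rightarrow> 'a \<Rightarrow> bool) \<Rightarrow> 'a list \<Rightarrow> bool" where
  "is_cycle E cs \<longleftrightarrow> length cs \<ge> 3 \<and> distinct cs \<and>
     (\<forall>i. Suc i < length cs \<longrightarrow> E (cs ! i) (cs ! Suc i)) \<and>
     E (last cs) (hd cs)"

definition acyclic_graph :: "('a \<Rightarrow> 'a \<Rightarrow> bool) \<Rightarrow> bool" where
  "acyclic_graph E \<longleftrightarrow> (\<nexists>cs. is_cycle E cs)"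

definition is_tree :: "'a set \<Rightarrow> ('a \<Rightarrow> 'a \<Rightarrow> bool) \<Rightarrow> bool" where
  "is_tree V E \<longleftrightarrow> simple_graph V E \<and> connected_graph V E \<and> acyclic_graph E"

definition proper_colouring :: "'a set \<Rightarrow> ('a \<Rightarrow> 'a \<Rightarrow> bool) \<Rightarrow> nat \<Rightarrow> ('a \<Rightarrow> nat) \<Rightarrow> bool" where
  "proper_colouring V E k c \<longleftrightarrow> (\<forall>v\<in>V. c v \<in> {1..k}) \<and>
     (\<forall>u\<in>V. \<forall>v\<in>V. E u v \<longrightarrow> c u \<noteq> c v)"

definition chromatic_number :: "'a set \<Rightarrow> ('a \<Rightarrow> 'a \<Rightarrow> bool) \<Rightarrow> nat" where
  "chromatic_number V E = (LEAST k. \<exists>c. proper_colouring V E k c)"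

definition unique_extension ::
  "'a set \<Rightarrow> ('a \<Rightarrow> 'a \<Rightarrow> bool) \<Rightarrow> nat \<Rightarrow> 'a set \<Rightarrow> ('a \<Rightarrow> nat) \<Rightarrow> bool" where
  "unique_extension V E k S p \<longleftrightarrow>
     (\<exists>c. proper_colouring V E k c \<and> (\<forall>v\<in>S. c v = p v) \<and>
        (\<forall>c'. proper_colouring V E k c' \<and> (\<forall>v\<in>S. c' v = p v) \<longrightarrow> (\<forall>v\<in>V. c' v = c v)))"

definition sn :: "'a set \<Rightarrow> ('a \<Rightarrow> 'a \<Rightarrow> bool) \<Rightarrow> nat \<Rightarrow> nat" where
  "sn V E k = (LEAST n. \<exists>S p. S \<subseteq> V \<and> (\<forall>v\<in>S. p v \<in> {1..k}) \<and>
                  card S = n \<and> unique_extension V E k S p)"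

end

(* Take a set S of sn(T,k') vertices whose k'-colouring extends uniquely, with extension c'.
   Uniqueness means the colours propagate out of S: the vertices can be ranked so that every
   vertex outside S sees all k' - 1 colours other than its own on neighbours of smaller rank.
   Otherwise the vertices not yet forced carry lists of at least two admissible colours, and a
   forest can always be list-coloured in a second way.  Now pick k - 1 such lower neighbours
   for every vertex outside S; removing leaves one at a time, a forest can be k-coloured so
   that each of these sets gets distinct colours.  The new colouring is forced by S in the same
   way, so sn(T,k) <= |S| = sn(T,k'). *)
theory Submission
  imports Defs
begin

lemma ex_not_in_of_card_less:
  assumes "finite X" "card X < card A"
  shows "\<exists>a\<in>A. a \<notin> X"
proof (rule ccontr)
  assume "\<not> ?thesis"
  then have "A \<subseteq> X" by blast
  then show False using card_mono[OF assms(1)] assms(2) by (simp add: not_le[symmetric])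
qed

lemma proper_colouring_subset:
  "proper_colouring V E k c \<Longrightarrow> W \<subseteq> V \<Longrightarrow> proper_colouring W E k c"
  unfolding proper_colouring_def by blast

lemma proper_colouring_mono_colours:
  "proper_colouring V E k c \<Longrightarrow> k \<le> k' \<Longrightarrow> proper_colouring V E k' c"
  unfolding proper_colouring_def by auto

lemma ex_proper_colouring_chromatic_number:
  assumes "finite V" "irreflp E"
  shows "\<exists>c. proper_colouring V E (chromatic_number V E) c"
proof -
  obtain h where h: "bij_betw h V {0..<card V}"
    using ex_bij_betw_finite_nat[OF assms(1)] by blast
  have "proper_colouring V E (card V) (\<lambda>x. Suc (h x))"
    using h assms(2) unfolding proper_colouring_def bij_betw_def inj_on_def irreflp_def
    by fastforce
  then show ?thesis
    unfolding chromatic_number_def by (rule LeastI[of "\<lambda>k. \<exists>c. proper_colouring V E k c", OF exI])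
qed

lemma unique_extension_iff:
  assumes "proper_colouring V E k c"
  shows "unique_extension V E k S c \<longleftrightarrow>
    (\<forall>c'. proper_colouring V E k c' \<and> (\<forall>v\<in>S. c' v = c v) \<longrightarrow> (\<forall>v\<in>V. c' v = c v))"
proof
  assume "unique_extension V E k S c"
  then obtain c1 where unique:
    "\<forall>c'. proper_colouring V E k c' \<and> (\<forall>v\<in>S. c' v = c v) \<longrightarrow> (\<forall>v\<in>V. c' v = c1 v)"
    unfolding unique_extension_def by blast
  show "\<forall>c'. proper_colouring V E k c' \<and> (\<forall>v\<in>S. c' v = c v) \<longrightarrow> (\<forall>v\<in>V. c' v = c v)"
  proof (intro allI impI)
    fix c' assume "proper_colouring V E k c' \<and> (\<forall>v\<in>S. c' v = c v)"
    then have "\<forall>v\<in>V. c' v = c1 v" using unique by blast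
    moreover have "\<forall>v\<in>V. c v = c1 v" using unique assms by blast
    ultimately show "\<forall>v\<in>V. c' v = c v" by simp
  qed
next
  assume "\<forall>c'. proper_colouring V E k c' \<and> (\<forall>v\<in>S. c' v = c v) \<longrightarrow> (\<forall>v\<in>V. c' v = c v)"
  then show "unique_extension V E k S c" using assms unfolding unique_extension_def by blast
qed

lemma ex_proper_colouring_unique_extension:
  assumes "unique_extension V E k S p"
  shows "\<exists>c. proper_colouring V E k c \<and> unique_extension V E k S c"
proof -
  obtain c where c: "proper_colouring V E k c" "\<forall>v\<in>S. c v = p v"
    and unique: "\<forall>c'. proper_colouring V E k c' \<and> (\<forall>v\<in>S. c' v = p v) \<longrightarrow> (\<forall>v\<in>V. c' v = c v)"
    using assms unfolding unique_extension_def by blast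
  then have "unique_extension V E k S c"
    unfolding unique_extension_iff[OF c(1)] by auto
  then show ?thesis using c(1) by blast
qed

lemma sn_le_card:
  assumes "S \<subseteq> V" "proper_colouring V E k c" "unique_extension V E k S c"
  shows "sn V E k \<le> card S"
  unfolding sn_def
  by (rule Least_le) (use assms in \<open>auto simp: proper_colouring_def\<close>)

lemma ex_sn_witness:
  assumes "proper_colouring V E k c"
  shows "\<exists>S p. S \<subseteq> V \<and> card S = sn V E k \<and> unique_extension V E k S p"
proof -
  let ?P = "\<lambda>n. \<exists>S p. S \<subseteq> V \<and> (\<forall>v\<in>S. p v \<in> {1..k}) \<and> card S = n \<and> unique_extension V E k S p"
  have "unique_extension V E k V c"
    using assms unfolding unique_extension_def by blast
  then have "?P (card V)"
    using assms unfolding proper_colouring_def by blast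
  then have "?P (sn V E k)"
    unfolding sn_def by (rule LeastI)
  then show ?thesis by blast
qed

text \<open>Every vertex outside S sees at least k - 1 colours on its neighbours of smaller rank, so
  in a proper k-colouring its own colour is forced by theirs.\<close>
definition forcing_rank ::
  "'a set \<Rightarrow> ('a \<Rightarrow> 'a \<Rightarrow> bool) \<Rightarrow> nat \<Rightarrow> ('a \<Rightarrow> nat) \<Rightarrow> 'a set \<Rightarrow> ('a \<Rightarrow> nat) \<Rightarrow> bool" where
  "forcing_rank V E k c S m \<longleftrightarrow> (\<forall>x\<in>V - S. k \<le> card (c ` {y\<in>V. E x y \<and> m y < m x}) + 1)"

lemma unique_extension_if_forcing_rank:
  assumes c: "proper_colouring V E k c" and m: "forcing_rank V E k c S m"
  shows "unique_extension V E k S c"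
  unfolding unique_extension_iff[OF c]
proof (intro allI impI)
  fix c' assume c': "proper_colouring V E k c' \<and> (\<forall>v\<in>S. c' v = c v)"
  have "c' x = c x" if "x \<in> V" for x
    using that
  proof (induction "m x" arbitrary: x rule: less_induct)
    case less
    show ?case
    proof (cases "x \<in> S")
      case True
      then show ?thesis using c' by blast
    next
      case False
      define A where "A = {y\<in>V. E x y \<and> m y < m x}"
      have "c ` A \<subseteq> {1..k}" "c x \<notin> c ` A"
        using c less.prems unfolding A_def proper_colouring_def by auto
      then have "c ` A \<subseteq> {1..k} - {c x}" by blast
      moreover have "k \<le> card (c ` A) + 1"
        using m less.prems False unfolding forcing_rank_def A_def by blast
      moreover have "card ({1..k} - {c x}) = k - 1"
        using c less.prems unfolding proper_colouring_def by simp
      ultimately have all_colours: "c ` A = {1..k} - {c x}"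
        by (intro card_seteq) auto
      have "c' x \<noteq> c y" if "y \<in> A" for y
      proof -
        have "c' x \<noteq> c' y"
          using c' less.prems that unfolding A_def proper_colouring_def by blast
        then show ?thesis using less.hyps that unfolding A_def by auto
      qed
      then have "c' x \<notin> c ` A" by blast
      moreover have "c' x \<in> {1..k}"
        using c' less.prems unfolding proper_colouring_def by blast
      ultimately show ?thesis using all_colours by blast
    qed
  qed
  then show "\<forall>v\<in>V. c' v = c v" by blast
qed

definition is_path :: "('a \<Rightarrow> 'a \<Rightarrow> bool) \<Rightarrow> 'a list \<Rightarrow> bool" where
  "is_path E xs \<longleftrightarrow> distinct xs \<and> (\<forall>i. Suc i < length xs \<longrightarrow> E (xs ! i) (xs ! Suc i))"

lemma is_path_snoc:
  assumes "is_path E xs" "xs \<noteq> []" "y \<notin> set xs" "E (last xs) y"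
  shows "is_path E (xs @ [y])"
  unfolding is_path_def
proof (intro conjI allI impI)
  show "distinct (xs @ [y])" using assms(1,3) unfolding is_path_def by simp
next
  fix i assume i: "Suc i < length (xs @ [y])"
  show "E ((xs @ [y]) ! i) ((xs @ [y]) ! Suc i)"
  proof (cases "Suc i < length xs")
    case True
    then show ?thesis using assms(1) unfolding is_path_def by (simp add: nth_append)
  next
    case False
    then have "i = length xs - 1" using i by simp
    then show ?thesis using assms(2,4) by (simp add: nth_append last_conv_nth)
  qed
qed

lemma ex_longest_path:
  assumes "finite W" "W \<noteq> {}"
  obtains xs where "is_path E xs" "set xs \<subseteq> W" "xs \<noteq> []"
    "\<forall>ys. is_path E ys \<and> set ys \<subseteq> W \<longrightarrow> length ys \<le> length xs"
proof -
  let ?P = "\<lambda>ys. is_path E ys \<and> set ys \<subseteq> W"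
  obtain w where "w \<in> W" using assms(2) by blast
  then have "?P [w]" unfolding is_path_def by simp
  moreover have "length ys < Suc (card W)" if "?P ys" for ys
    using that card_mono[OF assms(1)] distinct_card unfolding is_path_def by (metis less_Suc_eq_le)
  ultimately obtain xs where "?P xs" "\<forall>ys. ?P ys \<longrightarrow> length ys \<le> length xs"
    using Lattices_Big.ex_has_greatest_nat[of ?P "[w]" length "Suc (card W)"] by blast
  moreover from this have "xs \<noteq> []" using \<open>?P [w]\<close> by fastforce
  ultimately show ?thesis using that by blast
qed

locale forest =
  fixes E :: "'a \<Rightarrow> 'a \<Rightarrow> bool"
  assumes sym: "symp E" and irrefl: "irreflp E" and acyclic: "acyclic_graph E"
begin

lemma path_last_adjacent_nth:
  assumes "is_path E xs" "i < length xs" "E (last xs) (xs ! i)"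
  shows "Suc (Suc i) = length xs"
proof -
  have "xs \<noteq> []" using assms(2) by auto
  then have "i \<noteq> length xs - 1"
    using assms(3) irrefl by (auto simp: last_conv_nth irreflp_def)
  moreover have "\<not> i + 3 \<le> length xs"
  proof
    assume "i + 3 \<le> length xs"
    then have "is_cycle E (drop i xs)"
      unfolding is_cycle_def
    proof (intro conjI allI impI)
      show "3 \<le> length (drop i xs)" using \<open>i + 3 \<le> length xs\<close> by simp
      show "distinct (drop i xs)" using assms(1) unfolding is_path_def by simp
      show "E (last (drop i xs)) (hd (drop i xs))" using assms(2,3) by (simp add: hd_drop_conv_nth)
      fix q assume "Suc q < length (drop i xs)"
      then have "E (xs ! (i + q)) (xs ! Suc (i + q))"
        using assms(1) unfolding is_path_def by simp
      then show "E (drop i xs ! q) (drop i xs ! Suc q)" using assms(2) by simp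
    qed
    then show False using acyclic unfolding acyclic_graph_def by blast
  qed
  ultimately show ?thesis using assms(2) by linarith
qed

text \<open>The last vertex of a longest path is such a vertex: a second neighbour would either
  extend the path or close a cycle.\<close>
lemma ex_vertex_with_at_most_one_neighbour:
  assumes "finite W" "W \<noteq> {}"
  shows "\<exists>l\<in>W. \<forall>y\<in>W. \<forall>z\<in>W. E l y \<longrightarrow> E l z \<longrightarrow> y = z"
proof -
  obtain xs where path: "is_path E xs" "set xs \<subseteq> W" "xs \<noteq> []"
    and longest: "\<forall>ys. is_path E ys \<and> set ys \<subseteq> W \<longrightarrow> length ys \<le> length xs"
    using ex_longest_path[OF assms, where E = E] by blast
  have neighbour: "y = xs ! (length xs - 2)" if "y \<in> W" "E (last xs) y" for y
  proof -
    have "y \<in> set xs"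
    proof (rule ccontr)
      assume "y \<notin> set xs"
      then have "is_path E (xs @ [y])" by (rule is_path_snoc[OF path(1,3) _ that(2)])
      moreover have "set (xs @ [y]) \<subseteq> W" using path(2) that(1) by simp
      ultimately have "length (xs @ [y]) \<le> length xs" using longest by blast
      then show False by simp
    qed
    then obtain i where i: "i < length xs" "xs ! i = y" by (auto simp: in_set_conv_nth)
    then have "Suc (Suc i) = length xs" using path_last_adjacent_nth[OF path(1)] that(2) by simp
    then have "length xs - 2 = i" by simp
    then show ?thesis using i(2) by simp
  qed
  show ?thesis
  proof (intro bexI[of _ "last xs"] ballI impI)
    fix y z assume "y \<in> W" "z \<in> W" "E (last xs) y" "E (last xs) z"
    then show "y = z" using neighbour[of y] neighbour[of z] by simp
  qed (use path in auto)
qed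

lemma proper_colouring_fun_upd:
  assumes "proper_colouring (W - {l}) E k c" "a \<in> {1..k}" "\<forall>y\<in>W - {l}. E l y \<longrightarrow> a \<noteq> c y"
  shows "proper_colouring W E k (c(l := a))"
  unfolding proper_colouring_def
proof (intro conjI ballI impI)
  fix v assume "v \<in> W"
  then show "(c(l := a)) v \<in> {1..k}" using assms(1,2) unfolding proper_colouring_def by auto
next
  fix u v assume uv: "u \<in> W" "v \<in> W" "E u v"
  then have "u \<noteq> v" "E v u" using irrefl sym by (auto simp: irreflp_def symp_def)
  then show "(c(l := a)) u \<noteq> (c(l := a)) v"
    using assms(1,3) uv unfolding proper_colouring_def by auto
qed

lemma ex_other_list_colouring:
  assumes "finite W" "W \<noteq> {}" "\<forall>x\<in>W. L x \<subseteq> {1..k} \<and> 2 \<le> card (L x)"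
  shows "\<exists>c. proper_colouring W E k c \<and> (\<forall>x\<in>W. c x \<in> L x) \<and> (\<exists>x\<in>W. c x \<noteq> c0 x)"
  using assms
proof (induction "card W" arbitrary: W rule: less_induct)
  case less
  obtain l where l: "l \<in> W" and leaf: "\<forall>y\<in>W. \<forall>z\<in>W. E l y \<longrightarrow> E l z \<longrightarrow> y = z"
    using ex_vertex_with_at_most_one_neighbour[OF less.prems(1,2)] by blast
  define N where "N = {y\<in>W - {l}. E l y}"
  have finite_N: "finite N" using less.prems(1) unfolding N_def by simp
  have "card N \<le> 1"
    unfolding One_nat_def card_le_Suc0_iff_eq[OF finite_N] using leaf unfolding N_def by blast
  have "2 \<le> card (L l)" using less.prems(3) l by blast
  have extend: "proper_colouring W E k (c(l := a)) \<and> (\<forall>x\<in>W. (c(l := a)) x \<in> L x)"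
    if "proper_colouring (W - {l}) E k c" "\<forall>x\<in>W - {l}. c x \<in> L x" "a \<in> L l" "a \<notin> c ` N"
    for c a
  proof
    have "a \<in> {1..k}" using that(3) less.prems(3) l by blast
    moreover have "\<forall>y\<in>W - {l}. E l y \<longrightarrow> a \<noteq> c y" using that(4) unfolding N_def by blast
    ultimately show "proper_colouring W E k (c(l := a))" by (rule proper_colouring_fun_upd[OF that(1)])
    show "\<forall>x\<in>W. (c(l := a)) x \<in> L x" using that(2,3) by simp
  qed
  show ?case
  proof (cases "W - {l} = {}")
    case True
    have "card {c0 l} < card (L l)" using \<open>2 \<le> card (L l)\<close> by simp
    then obtain a where "a \<in> L l" "a \<notin> {c0 l}"
      using ex_not_in_of_card_less[of "{c0 l}"] by blast
    moreover have "proper_colouring (W - {l}) E k c0"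
      unfolding True proper_colouring_def by simp
    ultimately have "proper_colouring W E k (c0(l := a)) \<and> (\<forall>x\<in>W. (c0(l := a)) x \<in> L x)"
      using extend True unfolding N_def by blast
    then show ?thesis using \<open>a \<notin> {c0 l}\<close> l by (intro exI[of _ "c0(l := a)"]) auto
  next
    case False
    obtain c where c: "proper_colouring (W - {l}) E k c" "\<forall>x\<in>W - {l}. c x \<in> L x"
      "\<exists>x\<in>W - {l}. c x \<noteq> c0 x"
      using less.hyps[of "W - {l}"] less.prems False card_Diff1_less[OF less.prems(1) l] by blast
    have "card (c ` N) < card (L l)"
      using card_image_le[OF finite_N, of c] \<open>card N \<le> 1\<close> \<open>2 \<le> card (L l)\<close> by linarith
    then obtain a where "a \<in> L l" "a \<notin> c ` N"
      using ex_not_in_of_card_less[of "c ` N"] finite_N by blast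
    then have "proper_colouring W E k (c(l := a)) \<and> (\<forall>x\<in>W. (c(l := a)) x \<in> L x)"
      using extend[OF c(1,2)] by blast
    then show ?thesis using c(3) by (intro exI[of _ "c(l := a)"]) auto
  qed
qed

text \<open>If no vertex outside S were forced by S directly, the rest of the forest could be
  recoloured from lists of at least two admissible colours.\<close>
lemma ex_forced_vertex:
  assumes "finite V" "S \<subseteq> V" "S \<noteq> V"
    and c: "proper_colouring V E k c" and unique: "unique_extension V E k S c"
  shows "\<exists>x\<in>V - S. k \<le> card (c ` {y\<in>S. E x y}) + 1"
proof (rule ccontr)
  assume unforced: "\<not> ?thesis"
  define L where "L x = {1..k} - c ` {y\<in>S. E x y}" for x
  have "L x \<subseteq> {1..k} \<and> 2 \<le> card (L x)" if "x \<in> V - S" for x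
  proof -
    have "c ` {y\<in>S. E x y} \<subseteq> {1..k}"
      using assms(2) c unfolding proper_colouring_def by blast
    then have "card (L x) = k - card (c ` {y\<in>S. E x y})"
      unfolding L_def using assms(1,2) by (simp add: card_Diff_subset finite_subset)
    moreover have "\<not> k \<le> card (c ` {y\<in>S. E x y}) + 1" using that unforced by blast
    ultimately have "2 \<le> card (L x)" by linarith
    then show ?thesis unfolding L_def by blast
  qed
  then obtain c' where c': "proper_colouring (V - S) E k c'" "\<forall>x\<in>V - S. c' x \<in> L x"
    "\<exists>x\<in>V - S. c' x \<noteq> c x"
    using ex_other_list_colouring[of "V - S" L k c] assms(1-3) by blast
  define c'' where "c'' x = (if x \<in> S then c x else c' x)" for x
  have "proper_colouring V E k c''"
    unfolding proper_colouring_def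
  proof (intro conjI ballI impI)
    fix v assume "v \<in> V"
    then show "c'' v \<in> {1..k}" using c c'(1) unfolding c''_def proper_colouring_def by auto
  next
    fix u v assume uv: "u \<in> V" "v \<in> V" "E u v"
    then have "E v u" using sym by (simp add: symp_def)
    have across: "c' x \<noteq> c y" if "x \<in> V - S" "y \<in> S" "E x y" for x y
      using c'(2) that unfolding L_def by blast
    show "c'' u \<noteq> c'' v"
      using uv \<open>E v u\<close> c c'(1) across[of u v] across[of v u]
      unfolding c''_def proper_colouring_def by (cases "u \<in> S"; cases "v \<in> S") auto
  qed
  moreover have "\<forall>v\<in>S. c'' v = c v" unfolding c''_def by simp
  ultimately have "\<forall>v\<in>V. c'' v = c v"
    using unique unfolding unique_extension_iff[OF c] by blast
  then show False using c'(3) unfolding c''_def by auto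
qed

lemma ex_forcing_rank:
  assumes V: "finite V" and c: "proper_colouring V E k c"
    and "S \<subseteq> V" "unique_extension V E k S c"
  shows "\<exists>m. forcing_rank V E k c S m"
  using assms(3,4)
proof (induction "card (V - S)" arbitrary: S rule: less_induct)
  case less
  show ?case
  proof (cases "S = V")
    case True
    then show ?thesis unfolding forcing_rank_def by simp
  next
    case False
    obtain x where x: "x \<in> V - S" "k \<le> card (c ` {y\<in>S. E x y}) + 1"
      using ex_forced_vertex[OF V less.prems(1) False c less.prems(2)] by blast
    have "unique_extension V E k (insert x S) c"
      using less.prems(2) unfolding unique_extension_iff[OF c] by blast
    moreover have "card (V - insert x S) < card (V - S)"
      using card_Diff1_less[of "V - S" x] x(1) V by (simp add: Diff_insert [symmetric])
    ultimately obtain m where m: "forcing_rank V E k c (insert x S) m"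
      using less.hyps x(1) less.prems(1) by blast
    define m' where "m' y = (if y \<in> S then 0 else if y = x then 1 else m y + 2)" for y
    have count_mono: "card (c ` A) \<le> card (c ` {y\<in>V. P y})" if "A \<subseteq> {y\<in>V. P y}" for A P
      by (rule card_mono) (use V that in auto)
    have "forcing_rank V E k c S m'"
      unfolding forcing_rank_def
    proof
      fix z assume z: "z \<in> V - S"
      show "k \<le> card (c ` {y\<in>V. E z y \<and> m' y < m' z}) + 1"
      proof (cases "z = x")
        case True
        then have "{y\<in>S. E x y} \<subseteq> {y\<in>V. E z y \<and> m' y < m' z}"
          using less.prems(1) x(1) unfolding m'_def by auto
        then have "card (c ` {y\<in>S. E x y}) \<le> card (c ` {y\<in>V. E z y \<and> m' y < m' z})"
          by (rule count_mono)
        then show ?thesis using x(2) by linarith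
      next
        case False
        then have "{y\<in>V. E z y \<and> m y < m z} \<subseteq> {y\<in>V. E z y \<and> m' y < m' z}"
          using z unfolding m'_def by auto
        moreover have "k \<le> card (c ` {y\<in>V. E z y \<and> m y < m z}) + 1"
          using m False z unfolding forcing_rank_def by blast
        moreover note count_mono[OF calculation(1)]
        ultimately show ?thesis by linarith
      qed
    qed
    then show ?thesis by blast
  qed
qed

lemma ex_colour_for_leaf:
  assumes "finite W" "proper_colouring W E k c0" "l \<in> W"
    and leaf: "\<forall>y\<in>W. \<forall>z\<in>W. E l y \<longrightarrow> E l z \<longrightarrow> y = z"
    and D: "\<forall>x\<in>W. D x \<subseteq> {y\<in>W. E x y} \<and> card (D x) < k"
  shows "\<exists>a\<in>{1..k}. (\<forall>y\<in>W - {l}. E l y \<longrightarrow> a \<noteq> c y) \<and>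
    (\<forall>v\<in>W - {l}. l \<in> D v \<longrightarrow> a \<notin> c ` (D v - {l}))"
proof -
  have in_D_adjacent: "E l v" if "v \<in> W" "l \<in> D v" for v
    using D that sym by (auto simp: symp_def)
  consider "\<forall>y\<in>W - {l}. \<not> E l y" | v where "v \<in> W - {l}" "E l v" "\<forall>y\<in>W. E l y \<longrightarrow> y = v"
    using leaf by blast
  then show ?thesis
  proof cases
    case 1
    have "c0 l \<in> {1..k}" using assms(2,3) unfolding proper_colouring_def by blast
    then show ?thesis using 1 in_D_adjacent by blast
  next
    case (2 v)
    obtain a where a: "a \<in> {1..k}" "a \<noteq> c v" "l \<in> D v \<longrightarrow> a \<notin> c ` (D v - {l})"
    proof (cases "l \<in> D v")
      case True
      have "D v \<subseteq> W" "card (D v) < k" using D 2(1) by blast+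
      then have "finite (D v)" using assms(1) finite_subset by blast
      then have "card (c ` (D v - {l})) < card (D v)"
        using card_image_le[of "D v - {l}" c] card_Diff1_less[OF _ True] by fastforce
      then have "card (insert (c v) (c ` (D v - {l}))) < card {1..k}"
        using \<open>finite (D v)\<close> \<open>card (D v) < k\<close> by (simp add: card_insert_if)
      then obtain a where "a \<in> {1..k}" "a \<notin> insert (c v) (c ` (D v - {l}))"
        using ex_not_in_of_card_less \<open>finite (D v)\<close> by (metis finite_Diff finite_imageI finite_insert)
      then show ?thesis using that by blast
    next
      case False
      have "c0 l \<noteq> c0 v" "c0 l \<in> {1..k}" "c0 v \<in> {1..k}"
        using assms(2,3) 2(1,2) unfolding proper_colouring_def by auto
      moreover have "card {c0 l, c0 v} \<le> card {1..k}"
        by (rule card_mono) (use calculation in auto)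
      ultimately have "card {c v} < card {1..k}" by simp
      then obtain a where "a \<in> {1..k}" "a \<noteq> c v"
        using ex_not_in_of_card_less[of "{c v}" "{1..k}"] by auto
      then show ?thesis using that False by blast
    qed
    have "a \<noteq> c y" if "y \<in> W - {l}" "E l y" for y
      using 2(3) that a(2) by auto
    moreover have "a \<notin> c ` (D v' - {l})" if "v' \<in> W - {l}" "l \<in> D v'" for v'
      using in_D_adjacent[of v'] 2(3) that a(3) by auto
    ultimately show ?thesis using a(1) by blast
  qed
qed

text \<open>Induction by removing a vertex l with at most one neighbour: l lies in at most one
  set D v, and its colour only has to avoid c v and the colours on D v - {l}.\<close>
lemma ex_colouring_inj_on_neighbour_sets:
  assumes "finite W" "proper_colouring W E k c0"
    and "\<forall>x\<in>W. D x \<subseteq> {y\<in>W. E x y} \<and> card (D x) < k"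
  shows "\<exists>c. proper_colouring W E k c \<and> (\<forall>x\<in>W. inj_on c (D x))"
  using assms
proof (induction "card W" arbitrary: W D rule: less_induct)
  case less
  show ?case
  proof (cases "W = {}")
    case True
    then show ?thesis unfolding proper_colouring_def by simp
  next
    case False
    obtain l where l: "l \<in> W" and leaf: "\<forall>y\<in>W. \<forall>z\<in>W. E l y \<longrightarrow> E l z \<longrightarrow> y = z"
      using ex_vertex_with_at_most_one_neighbour[OF less.prems(1) False] by blast
    have "\<forall>x\<in>W - {l}. D x - {l} \<subseteq> {y\<in>W - {l}. E x y} \<and> card (D x - {l}) < k"
    proof
      fix x assume "x \<in> W - {l}"
      then have "D x \<subseteq> {y\<in>W. E x y}" "card (D x) < k" using less.prems(3) by auto
      then show "D x - {l} \<subseteq> {y\<in>W - {l}. E x y} \<and> card (D x - {l}) < k"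
        using card_Diff1_le[of "D x" l] by auto
    qed
    moreover have "card (W - {l}) < card W" "finite (W - {l})"
      using card_Diff1_less[OF less.prems(1) l] less.prems(1) by auto
    moreover have "proper_colouring (W - {l}) E k c0"
      using less.prems(2) by (rule proper_colouring_subset) blast
    ultimately obtain c where c: "proper_colouring (W - {l}) E k c"
      "\<forall>x\<in>W - {l}. inj_on c (D x - {l})"
      using less.hyps[of "W - {l}" "\<lambda>x. D x - {l}"] by blast
    obtain a where a: "a \<in> {1..k}" "\<forall>y\<in>W - {l}. E l y \<longrightarrow> a \<noteq> c y"
      "\<forall>v\<in>W - {l}. l \<in> D v \<longrightarrow> a \<notin> c ` (D v - {l})"
      using ex_colour_for_leaf[OF less.prems(1,2) l leaf less.prems(3)] by blast
    have "inj_on (c(l := a)) (D x)" if "x \<in> W" for x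
    proof (cases "x = l")
      case True
      have "D l \<subseteq> {y\<in>W. E l y}" using less.prems(3) l by blast
      then show ?thesis using leaf True unfolding inj_on_def by blast
    next
      case False
      then have "inj_on c (D x - {l})" using c(2) that by blast
      then have inj: "inj_on (c(l := a)) (D x - {l})" by (simp add: inj_on_def)
      show ?thesis
      proof (cases "l \<in> D x")
        case True
        have "a \<notin> (c(l := a)) ` (D x - {l})" using a(3) False that True by auto
        then have "inj_on (c(l := a)) (insert l (D x - {l}))"
          using inj by (intro iffD2[OF inj_on_insert]) auto
        then show ?thesis using True by (simp add: insert_absorb)
      next
        case False
        then show ?thesis using inj by simp
      qed
    qed
    then show ?thesis using proper_colouring_fun_upd[OF c(1) a(1,2)] by blast
  qed
qed

text \<open>Choose k - 1 lower neighbours of every vertex outside S and colour them injectively.\<close>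
lemma forcing_rank_fewer_colours:
  assumes V: "finite V" and c0: "proper_colouring V E k c0"
    and m: "forcing_rank V E k' c' S m" and "k \<le> k'"
  shows "\<exists>c. proper_colouring V E k c \<and> forcing_rank V E k c S m"
proof -
  let ?lower = "\<lambda>x. {y\<in>V. E x y \<and> m y < m x}"
  have lower_subsets: "\<forall>x\<in>V - S. \<exists>D. D \<subseteq> ?lower x \<and> card D = k - 1"
  proof
    fix x assume "x \<in> V - S"
    then have "k' \<le> card (c' ` ?lower x) + 1" using m unfolding forcing_rank_def by blast
    moreover have "card (c' ` ?lower x) \<le> card (?lower x)" using V by (intro card_image_le) simp
    ultimately have "k - 1 \<le> card (?lower x)" using \<open>k \<le> k'\<close> by linarith
    then show "\<exists>D. D \<subseteq> ?lower x \<and> card D = k - 1"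
      by (rule obtain_subset_with_card_n) blast
  qed
  then obtain D where D: "\<forall>x\<in>V - S. D x \<subseteq> ?lower x \<and> card (D x) = k - 1"
    using bchoice[OF lower_subsets] by blast
  define D' where "D' x = (if x \<in> S then {} else D x)" for x
  have "\<forall>x\<in>V. D' x \<subseteq> {y\<in>V. E x y} \<and> card (D' x) < k"
  proof
    fix x assume "x \<in> V"
    then have "c0 x \<in> {1..k}" using c0 unfolding proper_colouring_def by blast
    then show "D' x \<subseteq> {y\<in>V. E x y} \<and> card (D' x) < k"
      using D \<open>x \<in> V\<close> unfolding D'_def by auto
  qed
  then obtain c where c: "proper_colouring V E k c" "\<forall>x\<in>V. inj_on c (D' x)"
    using ex_colouring_inj_on_neighbour_sets[OF V c0] by blast
  have "k \<le> card (c ` ?lower x) + 1" if x: "x \<in> V - S" for x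
  proof -
    have "k - 1 = card (D x)" using D x by simp
    also have "\<dots> = card (c ` D x)"
    proof -
      have "inj_on c (D' x)" using c(2) x by blast
      then show ?thesis using x unfolding D'_def by (simp add: card_image)
    qed
    also have "\<dots> \<le> card (c ` ?lower x)"
      using D x V by (intro card_mono image_mono) auto
    finally show ?thesis by linarith
  qed
  then show ?thesis using c(1) unfolding forcing_rank_def by blast
qed

end

theorem corollary1:
  fixes V :: "'a set" and E :: "'a \<Rightarrow> 'a \<Rightarrow> bool" and k k' :: nat
  assumes "is_tree V E"
    and "chromatic_number V E \<le> k"
    and "k \<le> k'"
  shows "sn V E k \<le> sn V E k'"
proof -
  have V: "finite V" and forest: "forest E"
    using assms(1) unfolding is_tree_def simple_graph_def forest_def symp_def irreflp_def by auto
  interpret forest E by (rule forest)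
  obtain c0 where c0: "proper_colouring V E (chromatic_number V E) c0"
    using ex_proper_colouring_chromatic_number[OF V irrefl] by blast
  have c0k: "proper_colouring V E k c0" and c0k': "proper_colouring V E k' c0"
    using proper_colouring_mono_colours[OF c0] assms(2,3) by simp_all
  obtain S p where S: "S \<subseteq> V" "card S = sn V E k'" "unique_extension V E k' S p"
    using ex_sn_witness[OF c0k'] by blast
  obtain c' where c': "proper_colouring V E k' c'" "unique_extension V E k' S c'"
    using ex_proper_colouring_unique_extension[OF S(3)] by blast
  obtain m where "forcing_rank V E k' c' S m"
    using ex_forcing_rank[OF V c'(1) S(1) c'(2)] by blast
  then obtain c where c: "proper_colouring V E k c" "forcing_rank V E k c S m"
    using forcing_rank_fewer_colours[OF V c0k _ assms(3)] by blast
  have "sn V E k \<le> card S"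
    using sn_le_card[OF S(1) c(1) unique_extension_if_forcing_rank[OF c]] .
  then show ?thesis using S(2) by simp
qed

end
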